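(* Let $n\ge 1$. For $i,j\in\{1,\dots,n\}$ let $L_i>0$, $\mu_i>0$, $\theta_i\ge 0$, $\lambda_i\ge 0$ and $\gamma_{ij}\ge 0$ be real numbers with $\gamma_{ii}=0$ and $\gamma_{ij}=\gamma_{ji}$. Let $A$ be the $n\times n$ matrix with $A_{ii}=-\big(\frac{\mu_i}{L_i}+\theta_i+\sum_{j=1}^n\frac{\gamma_{ij}}{L_i}\big)$ and $A_{ij}=\frac{\gamma_{ij}}{L_j}$ for $i\ne j$, and $b\in\mathbb{R}^n$ with $b_i=\mu_i-\lambda_i$. Let $y(t)=(y_1(t),\dots,y_n(t))^t$ be the solution of $y'(t)=Ay(t)+b$ and $y^*=-A^{-1}b=(y_1^*,\dots,y_n^* )^t$ its equilibrium point. Put $$L_a=\sum_{i=1}^nL_i,\quad \mu_a=\sum_{i=1}^n\mu_i,\quad \lambda_a=\sum_{i=1}^n\lambda_i,\quad \bar\theta=\frac1n\sum_{i=1}^n\theta_i,$$ let $y_a(t)$ be the solution of the scalar equation $y_a'(t)=-\big(\frac{\mu_a}{L_a}+\bar\theta\big)y_a(t)+(\mu_a-\lambda_a)$, and let $y_a^*=\frac{\mu_a-\lambda_a}{\mu_a/L_a+\bar\theta}$ be its equilibrium value. If $$\frac{\mu_1}{L_1}=\frac{\mu_2}{L_2}=\cdots=\frac{\mu_n}{L_n}\quad\text{and}\quad \theta_1=\cdots=\theta_n,$$ then $\sum_{i=1}^n y_i^*=y_a^*$. Furthermore, if in addition $\sum_{i=1}^n y_i(0)=y_a(0)$, then $\sum_{i=1}^n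 y_i(t)=y_a(t)$ for all $t\ge 0$.
   Context: The vector system models the inventory levels of $n$ warehouses in one echelon with maximum levels $L_i$, maximum supply rates $\mu_i$, deterioration percentages $\theta_i$, demand rates $\lambda_i$ and maximum lateral transshipment rates $\gamma_{ij}$; the scalar equation is the aggregated model in which the $n$ warehouses are combined into one warehouse. The matrix $A$ is invertible (all its eigenvalues have negative real part). *)

theory Defs
  imports "HOL-Analysis.Analysis"
begin

end

theory Submission
  imports Defs
begin

text \<open>When all warehouses share the supply-to-capacity ratio and the deterioration rate,
  the column sums of \<open>A\<close> all equal \<open>-c\<close> with \<open>c = \<mu>\<^sub>i/L\<^sub>i + \<theta>\<^sub>i\<close>, because the
  transshipment terms leaving one warehouse arrive at the others. Hence
  \<open>\<Sum>\<^sub>i (A x)\<^sub>i = -c \<Sum>\<^sub>i x\<^sub>i\<close>, and summing the components of \<open>y' = Ay + b\<close> gives exactly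
  the aggregated scalar equation, whose coefficient \<open>\<mu>\<^sub>a/L\<^sub>a + \<theta>\<close> is again \<open>c\<close>.
  Uniqueness for linear scalar ODEs then yields the dynamic claim, and summing \<open>A y\<^sup>* = -b\<close>
  yields the equilibrium claim. \<open>A\<close> is invertible since it is strictly column diagonally
  dominant.\<close>

lemma sum_matrix_vector_mult_column_sums:
  fixes A :: "'a::comm_semiring_1^'n^'m"
  assumes "\<And>j. (\<Sum>i\<in>UNIV. A $ i $ j) = s"
  shows "(\<Sum>i\<in>UNIV. (A *v x) $ i) = s * (\<Sum>j\<in>UNIV. x $ j)"
proof -
  have "(\<Sum>i\<in>UNIV. (A *v x) $ i) = (\<Sum>j\<in>UNIV. (\<Sum>i\<in>UNIV. A $ i $ j) * x $ j)"
    by (simp add: matrix_vector_mult_def sum_distrib_right) (rule sum.swap)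
  also have "\<dots> = s * (\<Sum>j\<in>UNIV. x $ j)"
    by (simp add: assms sum_distrib_left)
  finally show ?thesis .
qed

lemma invertible_if_column_diagonally_dominant:
  fixes A :: "real^'n^'n"
  assumes dominant: "\<And>j. (\<Sum>i\<in>UNIV - {j}. \<bar>A $ i $ j\<bar>) < \<bar>A $ j $ j\<bar>"
  shows "invertible A"
proof -
  txt \<open>At an entry of maximal modulus, a kernel vector of \<open>transpose A\<close> would violate
    the dominance of that column.\<close>
  have "v = 0" if "transpose A *v v = 0" for v
  proof (rule ccontr)
    assume "v \<noteq> 0"
    define m where "m = Max (range (\<lambda>i. \<bar>v $ i\<bar>))"
    have "m \<in> range (\<lambda>i. \<bar>v $ i\<bar>)"
      unfolding m_def by (rule Max_in) auto
    then obtain j where "\<bar>v $ j\<bar> = m"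
      by auto
    have j_max: "\<bar>v $ i\<bar> \<le> \<bar>v $ j\<bar>" for i
      unfolding \<open>\<bar>v $ j\<bar> = m\<close> m_def by (rule Max_ge) auto
    obtain k where "v $ k \<noteq> 0"
      using \<open>v \<noteq> 0\<close> by (auto simp: vec_eq_iff)
    then have "\<bar>v $ j\<bar> > 0"
      using j_max[of k] by linarith
    have "(\<Sum>i\<in>UNIV. A $ i $ j * v $ i) = 0"
      using that by (auto simp: vec_eq_iff matrix_vector_mult_def transpose_def)
    then have "A $ j $ j * v $ j = - (\<Sum>i\<in>UNIV - {j}. A $ i $ j * v $ i)"
      by (simp add: sum.remove[of UNIV j])
    then have "\<bar>A $ j $ j\<bar> * \<bar>v $ j\<bar> = \<bar>\<Sum>i\<in>UNIV - {j}. A $ i $ j * v $ i\<bar>"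
      by (simp add: abs_mult[symmetric])
    also have "\<dots> \<le> (\<Sum>i\<in>UNIV - {j}. \<bar>A $ i $ j\<bar> * \<bar>v $ i\<bar>)"
      by (simp add: abs_mult[symmetric] sum_abs)
    also have "\<dots> \<le> (\<Sum>i\<in>UNIV - {j}. \<bar>A $ i $ j\<bar>) * \<bar>v $ j\<bar>"
      unfolding sum_distrib_right by (intro sum_mono mult_left_mono j_max) auto
    also have "\<dots> < \<bar>A $ j $ j\<bar> * \<bar>v $ j\<bar>"
      using dominant \<open>\<bar>v $ j\<bar> > 0\<close> by (rule mult_strict_right_mono)
    finally show False by simp
  qed
  then have "\<exists>B. B ** transpose A = mat 1"
    by (simp add: matrix_left_invertible_ker)
  then show ?thesis
    by (simp add: left_invertible_transpose invertible_right_inverse)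
qed

lemma matrix_inv_right:
  assumes "invertible A"
  shows "A ** matrix_inv A = mat 1"
  using someI_ex[OF assms[unfolded invertible_def]] by (simp add: matrix_inv_def)

lemma linear_ode_solution:
  fixes h :: "real \<Rightarrow> real"
  assumes ode: "\<And>s. s \<ge> 0 \<Longrightarrow> (h has_real_derivative a * h s) (at s within {0..})"
    and "t \<ge> 0"
  shows "h t = h 0 * exp (a * t)"
proof -
  define g where "g s = h s * exp (- a * s)" for s
  have "(g has_real_derivative 0) (at s within {0..})" if "s \<in> {0..}" for s
    unfolding g_def using that
    by (auto intro!: derivative_eq_intros ode simp: algebra_simps)
  then obtain k where "\<And>s. s \<in> {0..} \<Longrightarrow> g s = k"
    using has_field_derivative_zero_constant[of "{0..}" g] by (auto simp: convex_real_interval)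
  then have "g t = g 0" using \<open>t \<ge> 0\<close> by simp
  then show ?thesis
    by (simp add: g_def exp_minus field_simps)
qed

lemma sum_equilibrium_eq_if_column_sums:
  fixes A :: "real^'n^'n"
  assumes "invertible A" and "\<And>j. (\<Sum>i\<in>UNIV. A $ i $ j) = - c" and "c \<noteq> 0"
  shows "(\<Sum>i\<in>UNIV. (- (matrix_inv A *v b)) $ i) = (\<Sum>i\<in>UNIV. b $ i) / c"
proof -
  have "(\<Sum>i\<in>UNIV. b $ i) = (\<Sum>i\<in>UNIV. (A *v (matrix_inv A *v b)) $ i)"
    using matrix_inv_right[OF \<open>invertible A\<close>] by (simp add: matrix_vector_mul_assoc)
  also have "\<dots> = - c * (\<Sum>i\<in>UNIV. (matrix_inv A *v b) $ i)"
    using assms(2) by (rule sum_matrix_vector_mult_column_sums)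
  finally show ?thesis
    using \<open>c \<noteq> 0\<close> by (simp add: sum_negf field_simps)
qed

lemma affine_ode_unique:
  fixes f g :: "real \<Rightarrow> real"
  assumes f: "\<And>s. s \<ge> 0 \<Longrightarrow> (f has_real_derivative a * f s + d) (at s within {0..})"
    and g: "\<And>s. s \<ge> 0 \<Longrightarrow> (g has_real_derivative a * g s + d) (at s within {0..})"
    and "f 0 = g 0" and "t \<ge> 0"
  shows "f t = g t"
proof -
  have "((\<lambda>s. f s - g s) has_real_derivative a * (f s - g s)) (at s within {0..})"
    if "s \<ge> 0" for s
    using DERIV_diff[OF f g, OF that that] by (simp add: algebra_simps)
  from linear_ode_solution[OF this \<open>t \<ge> 0\<close>] \<open>f 0 = g 0\<close> show ?thesis
    by simp
qed

lemma has_vector_derivative_sum_components: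
  fixes y :: "real \<Rightarrow> 'a::real_normed_vector^'n"
  assumes "(y has_vector_derivative y') (at t within S)"
  shows "((\<lambda>t. \<Sum>i\<in>UNIV. y t $ i) has_vector_derivative (\<Sum>i\<in>UNIV. y' $ i)) (at t within S)"
proof -
  have "bounded_linear (\<lambda>v::'a^'n. \<Sum>i\<in>UNIV. v $ i)"
    by (intro bounded_linear_sum bounded_linear_vec_nth)
  from bounded_linear.has_vector_derivative[OF this assms] show ?thesis
    by simp
qed

lemma sum_divide_sum_eq_common_ratio:
  fixes L \<mu> :: "'a \<Rightarrow> real"
  assumes "finite S" and "S \<noteq> {}" and "\<And>i. i \<in> S \<Longrightarrow> L i > 0"
    and "\<And>i. i \<in> S \<Longrightarrow> \<mu> i / L i = r"
  shows "sum \<mu> S / sum L S = r"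
proof -
  have "\<mu> i = r * L i" if "i \<in> S" for i
    using assms(3,4)[OF that] by (auto simp: divide_eq_eq)
  then have "sum \<mu> S = r * sum L S"
    unfolding sum_distrib_left by (rule sum.cong[OF refl])
  moreover have "sum L S > 0"
    using assms by (intro sum_pos) auto
  ultimately show ?thesis
    by simp
qed

definition transshipment_matrix ::
  "('n::finite \<Rightarrow> real) \<Rightarrow> ('n \<Rightarrow> real) \<Rightarrow> ('n \<Rightarrow> real) \<Rightarrow> ('n \<Rightarrow> 'n \<Rightarrow> real) \<Rightarrow> real^'n^'n"
  where "transshipment_matrix L \<mu> \<theta> \<gamma> =
    (\<chi> i j. if i = j then - (\<mu> i / L i + \<theta> i + (\<Sum>k\<in>UNIV. \<gamma> i k / L i)) else \<gamma> i j / L j)"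

context
  fixes L \<mu> \<theta> :: "'n::finite \<Rightarrow> real" and \<gamma> :: "'n \<Rightarrow> 'n \<Rightarrow> real"
  assumes gamma_diag: "\<And>i. \<gamma> i i = 0" and gamma_sym: "\<And>i j. \<gamma> i j = \<gamma> j i"
begin

lemma transshipment_inflow_eq_outflow:
  "(\<Sum>i\<in>UNIV - {j}. \<gamma> i j / L j) = (\<Sum>k\<in>UNIV. \<gamma> j k / L j)"
  using sum.remove[of UNIV j "\<lambda>k. \<gamma> j k / L j"] gamma_diag gamma_sym by simp

lemma transshipment_matrix_column_sum:
  "(\<Sum>i\<in>UNIV. transshipment_matrix L \<mu> \<theta> \<gamma> $ i $ j) = - (\<mu> j / L j + \<theta> j)"
  using sum.remove[of UNIV j "\<lambda>i. transshipment_matrix L \<mu> \<theta> \<gamma> $ i $ j"]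
    transshipment_inflow_eq_outflow[of j]
  by (simp add: transshipment_matrix_def)

lemma invertible_transshipment_matrix:
  assumes "\<And>i. L i > 0" and "\<And>i. \<mu> i > 0" and "\<And>i. \<theta> i \<ge> 0" and "\<And>i j. \<gamma> i j \<ge> 0"
  shows "invertible (transshipment_matrix L \<mu> \<theta> \<gamma>)"
proof (rule invertible_if_column_diagonally_dominant)
  fix j
  have "\<mu> j / L j > 0"
    using assms(1,2) by simp
  have outflow_nonneg: "(\<Sum>k\<in>UNIV. \<gamma> j k / L j) \<ge> 0"
    using assms by (intro sum_nonneg divide_nonneg_pos) (auto intro: less_imp_le)
  have "(\<Sum>i\<in>UNIV - {j}. \<bar>transshipment_matrix L \<mu> \<theta> \<gamma> $ i $ j\<bar>) = (\<Sum>i\<in>UNIV - {j}. \<gamma> i j / L j)"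
    using assms(1,4) by (intro sum.cong) (auto simp: transshipment_matrix_def abs_of_pos abs_of_nonneg)
  also have "\<dots> = (\<Sum>k\<in>UNIV. \<gamma> j k / L j)"
    by (rule transshipment_inflow_eq_outflow)
  also have "\<dots> < \<mu> j / L j + \<theta> j + (\<Sum>k\<in>UNIV. \<gamma> j k / L j)"
    using \<open>\<mu> j / L j > 0\<close> assms(3) by (simp add: add_pos_nonneg)
  also have "\<dots> = \<bar>transshipment_matrix L \<mu> \<theta> \<gamma> $ j $ j\<bar>"
    using \<open>\<mu> j / L j > 0\<close> assms(3)[of j] outflow_nonneg by (simp add: transshipment_matrix_def)
  finally show "(\<Sum>i\<in>UNIV - {j}. \<bar>transshipment_matrix L \<mu> \<theta> \<gamma> $ i $ j\<bar>)
      < \<bar>transshipment_matrix L \<mu> \<theta> \<gamma> $ j $ j\<bar>" .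
qed

end

theorem proposition4:
  fixes L \<mu> \<theta> lam :: "'n::finite \<Rightarrow> real"
    and \<gamma> :: "'n \<Rightarrow> 'n \<Rightarrow> real"
    and A :: "real^'n^'n" and b :: "real^'n"
    and y :: "real \<Rightarrow> real^'n" and ya :: "real \<Rightarrow> real"
  assumes L_pos: "\<And>i. L i > 0"
    and mu_pos: "\<And>i. \<mu> i > 0"
    and theta_nn: "\<And>i. \<theta> i \<ge> 0"
    and lambda_nn: "\<And>i. lam i \<ge> 0"
    and gamma_nn: "\<And>i j. \<gamma> i j \<ge> 0"
    and gamma_diag: "\<And>i. \<gamma> i i = 0"
    and gamma_sym: "\<And>i j. \<gamma> i j = \<gamma> j i"
    and A_def: "A = (\<chi> i j. if i = j
                    then - (\<mu> i / L i + \<theta> i + (\<Sum>k\<in>UNIV. \<gamma> i k / L i))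
                    else \<gamma> i j / L j)"
    and b_def: "b = (\<chi> i. \<mu> i - lam i)"
    and y_sol: "\<And>t. t \<ge> 0 \<Longrightarrow>
        (y has_vector_derivative (A *v y t + b)) (at t within {0..})"
    and ya_sol: "\<And>t. t \<ge> 0 \<Longrightarrow>
        (ya has_real_derivative
           (- ((\<Sum>i\<in>UNIV. \<mu> i) / (\<Sum>i\<in>UNIV. L i)
               + (\<Sum>i\<in>UNIV. \<theta> i) / real CARD('n)) * ya t
            + ((\<Sum>i\<in>UNIV. \<mu> i) - (\<Sum>i\<in>UNIV. lam i)))) (at t within {0..})"
    and ratio_eq: "\<And>i j. \<mu> i / L i = \<mu> j / L j"
    and theta_eq: "\<And>i j. \<theta> i = \<theta> j"
  shows "(\<Sum>i\<in>UNIV. (- (matrix_inv A *v b)) $ i)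
           = ((\<Sum>i\<in>UNIV. \<mu> i) - (\<Sum>i\<in>UNIV. lam i))
             / ((\<Sum>i\<in>UNIV. \<mu> i) / (\<Sum>i\<in>UNIV. L i)
                + (\<Sum>i\<in>UNIV. \<theta> i) / real CARD('n))
         \<and> ((\<Sum>i\<in>UNIV. y 0 $ i) = ya 0 \<longrightarrow>
              (\<forall>t\<ge>0. (\<Sum>i\<in>UNIV. y t $ i) = ya t))"
proof -
  fix i0 :: 'n
  define c where "c = \<mu> i0 / L i0 + \<theta> i0"
  have rate: "\<mu> j / L j + \<theta> j = c" for j
    unfolding c_def using ratio_eq[of j i0] theta_eq[of j i0] by simp
  have "c > 0"
    unfolding c_def using mu_pos[of i0] L_pos[of i0] theta_nn[of i0] by (simp add: add_pos_nonneg)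
  have aggregate_rate: "(\<Sum>i\<in>UNIV. \<mu> i) / (\<Sum>i\<in>UNIV. L i) + (\<Sum>i\<in>UNIV. \<theta> i) / real CARD('n) = c"
  proof -
    have "(\<Sum>i\<in>UNIV. \<theta> i) = real CARD('n) * \<theta> i0"
      using sum.cong[of UNIV UNIV \<theta> "\<lambda>_. \<theta> i0"] theta_eq by simp
    then show ?thesis
      using sum_divide_sum_eq_common_ratio[of UNIV L \<mu>, OF _ _ L_pos ratio_eq] by (simp add: c_def)
  qed
  have A_eq: "A = transshipment_matrix L \<mu> \<theta> \<gamma>"
    unfolding A_def transshipment_matrix_def ..
  have column_sums: "(\<Sum>i\<in>UNIV. A $ i $ j) = - c" for j
    unfolding A_eq transshipment_matrix_column_sum[OF gamma_diag gamma_sym] rate ..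
  have "invertible A"
    unfolding A_eq using gamma_diag gamma_sym L_pos mu_pos theta_nn gamma_nn
    by (rule invertible_transshipment_matrix)
  have sum_b: "(\<Sum>i\<in>UNIV. b $ i) = (\<Sum>i\<in>UNIV. \<mu> i) - (\<Sum>i\<in>UNIV. lam i)"
    by (simp add: b_def sum_subtractf)
  have "((\<lambda>t. \<Sum>i\<in>UNIV. y t $ i) has_real_derivative
          - c * (\<Sum>i\<in>UNIV. y t $ i) + ((\<Sum>i\<in>UNIV. \<mu> i) - (\<Sum>i\<in>UNIV. lam i))) (at t within {0..})"
    if "t \<ge> 0" for t
    using has_vector_derivative_sum_components[OF y_sol[OF that]]
    by (simp add: has_real_derivative_iff_has_vector_derivative sum.distrib sum_b
        sum_matrix_vector_mult_column_sums[OF column_sums])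
  from affine_ode_unique[OF this ya_sol[unfolded aggregate_rate]]
  show ?thesis
    using sum_equilibrium_eq_if_column_sums[OF \<open>invertible A\<close> column_sums] \<open>c > 0\<close>
    by (simp add: aggregate_rate sum_b)
qed

end
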